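(* Let $M\subset\mathbb{R}^2$ be a connected, simply connected open set and let $X:M\to\mathbb{R}^4_1$ be a minimal spacelike graph of first type $X(x,y)=(A(x,y),x,y,B(x,y))$ or of second type $X(x,y)=(x,A(x,y),B(x,y),y)$, with coefficients $E,F,G$ and $W=\sqrt{EG-F^2}$. Fix $z_0\in M$. Then the functions $$u(x,y)=x+\int_{z_0}^{(x,y)}\frac{E\,dx+F\,dy}{W},\qquad v(x,y)=y+\int_{z_0}^{(x,y)}\frac{F\,dx+G\,dy}{W}$$ are well defined on $M$ and satisfy the generalized Cauchy–Riemann equations $$u_y=\frac FE u_x-\frac WE v_x,\qquad v_y=\frac WE u_x+\frac FE v_x,$$ so that $(u,v)$ provide isothermic parameters for $X(M)$.
   Context: $\mathbb{R}^4_1$: $\mathbb{R}^4$ with $\langle (a_0,\dots,a_3),(b_0,\dots,b_3)\rangle=-a_0b_0+a_1b_1+a_2b_2+a_3b_3$. $E=\langle X_x,X_x\rangle$, $F=\langle X_x,X_y\rangle$, $G=\langle X_y,X_y\rangle$. $A,B$ are smooth real functions. Minimal means vanishing mean curvature vector. Isothermic parameters $(u,v)$: the induced metric is $\lambda^2(du^2+dv^2)$. *)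

theory Defs
  imports "HOL-Analysis.Analysis"
begin

text \<open>Points of the parameter domain are pairs (x,y) :: real \<times> real.
  Minkowski space R^4_1 is modelled as real^4 with the Lorentzian product below.\<close>

definition lip :: "real^4 \<Rightarrow> real^4 \<Rightarrow> real" where
  "lip a b = - (a$1 * b$1) + a$2 * b$2 + a$3 * b$3 + a$4 * b$4"

definition mk4 :: "real \<Rightarrow> real \<Rightarrow> real \<Rightarrow> real \<Rightarrow> real^4" where
  "mk4 a b c d = (\<chi> i. if i = 1 then a else if i = 2 then b else if i = 3 then c else d)"

definition px :: "(real \<times> real \<Rightarrow> 'b::real_normed_vector) \<Rightarrow> real \<times> real \<Rightarrow> 'b" where
  "px f p = vector_derivative (\<lambda>t. f (t, snd p)) (at (fst p))"

definition py :: "(real \<times> real \<Rightarrow> 'b::real_normed_vector) \<Rightarrow> real \<times> real \<Rightarrow> 'b" where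
  "py f p = vector_derivative (\<lambda>t. f (fst p, t)) (at (snd p))"

fun Ck_on :: "nat \<Rightarrow> (real \<times> real) set \<Rightarrow> (real \<times> real \<Rightarrow> real) \<Rightarrow> bool" where
  "Ck_on 0 M f = continuous_on M f"
| "Ck_on (Suc k) M f = (continuous_on M f \<and> f differentiable_on M \<and>
      Ck_on k M (px f) \<and> Ck_on k M (py f))"

definition smooth_on :: "(real \<times> real) set \<Rightarrow> (real \<times> real \<Rightarrow> real) \<Rightarrow> bool" where
  "smooth_on M f = (\<forall>k. Ck_on k M f)"

definition graph1 :: "(real \<times> real \<Rightarrow> real) \<Rightarrow> (real \<times> real \<Rightarrow> real) \<Rightarrow> real \<times> real \<Rightarrow> real^4" where
  "graph1 A B p = mk4 (A p) (fst p) (snd p) (B p)"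

definition graph2 :: "(real \<times> real \<Rightarrow> real) \<Rightarrow> (real \<times> real \<Rightarrow> real) \<Rightarrow> real \<times> real \<Rightarrow> real^4" where
  "graph2 A B p = mk4 (fst p) (A p) (B p) (snd p)"

definition EE :: "(real \<times> real \<Rightarrow> real^4) \<Rightarrow> real \<times> real \<Rightarrow> real" where
  "EE X p = lip (px X p) (px X p)"
definition FF :: "(real \<times> real \<Rightarrow> real^4) \<Rightarrow> real \<times> real \<Rightarrow> real" where
  "FF X p = lip (px X p) (py X p)"
definition GG :: "(real \<times> real \<Rightarrow> real^4) \<Rightarrow> real \<times> real \<Rightarrow> real" where
  "GG X p = lip (py X p) (py X p)"
definition WW :: "(real \<times> real \<Rightarrow> real^4) \<Rightarrow> real \<times> real \<Rightarrow> real" where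
  "WW X p = sqrt (EE X p * GG X p - (FF X p)\<^sup>2)"

definition spacelike_on :: "(real \<times> real) set \<Rightarrow> (real \<times> real \<Rightarrow> real^4) \<Rightarrow> bool" where
  "spacelike_on M X = (\<forall>p\<in>M. EE X p > 0 \<and> EE X p * GG X p - (FF X p)\<^sup>2 > 0)"

text \<open>Normal component of a vector w at p (orthogonal projection w.r.t. the
  Lorentzian product onto the normal space of the spacelike tangent plane).\<close>
definition nproj :: "(real \<times> real \<Rightarrow> real^4) \<Rightarrow> real \<times> real \<Rightarrow> real^4 \<Rightarrow> real^4" where
  "nproj X p w = (let E = EE X p; F = FF X p; G = GG X p; D = E * G - F\<^sup>2;
      a = (G * lip w (px X p) - F * lip w (py X p)) / D;
      b = (E * lip w (py X p) - F * lip w (px X p)) / D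
    in w - a *\<^sub>R px X p - b *\<^sub>R py X p)"

text \<open>Mean curvature vector H = (1/2) g^{ij} (X_ij)^normal.\<close>
definition mean_curv :: "(real \<times> real \<Rightarrow> real^4) \<Rightarrow> real \<times> real \<Rightarrow> real^4" where
  "mean_curv X p = (let E = EE X p; F = FF X p; G = GG X p; D = E * G - F\<^sup>2
    in (1 / (2 * D)) *\<^sub>R (G *\<^sub>R nproj X p (px (px X) p)
        - (2 * F) *\<^sub>R nproj X p (py (px X) p) + E *\<^sub>R nproj X p (py (py X) p)))"

definition minimal_on :: "(real \<times> real) set \<Rightarrow> (real \<times> real \<Rightarrow> real^4) \<Rightarrow> bool" where
  "minimal_on M X = (\<forall>p\<in>M. mean_curv X p = 0)"

end

theory Submission
  imports Defs "HOL-Complex_Analysis.Complex_Analysis"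
begin

text \<open>With \<open>W = sqrt (E G - F\<^sup>2)\<close>, the forms \<open>(E dx + F dy) / W\<close> and \<open>(F dx + G dy) / W\<close> are closed
  on a minimal graph: their exterior derivatives are, up to the area element, the Laplace-Beltrami
  operator applied to the coordinate functions \<open>y\<close> and \<open>x\<close>, which are components of the mean
  curvature vector. Concretely, minimality of the graph of \<open>(A, B)\<close> amounts to
  \<open>G A\<^sub>x\<^sub>x - 2 F A\<^sub>x\<^sub>y + E A\<^sub>y\<^sub>y = 0\<close> and the same for \<open>B\<close>, and closedness is a polynomial
  consequence of these two equations.

  On a simply connected domain closed forms are exact. Writing \<open>P dx + Q dy = Re ((P - i Q) dz)\<close>,
  closedness says that \<open>\<partial>(P - i Q)/\<partial>z\<^sup>*\<close> is real, a property preserved by holomorphic pull-back, so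
  the Riemann mapping theorem reduces exactness to the disc, where a radial integral is a primitive.

  The resulting \<open>u = x + \<integral>(E dx + F dy) / W\<close> and \<open>v = y + \<integral>(F dx + G dy) / W\<close> have Jacobian
  matrix \<open>(1 + E/W, F/W; F/W, 1 + G/W)\<close>, and a direct computation shows that the metric is
  \<open>W\<^sup>2 / (2 W + E + G) (du\<^sup>2 + dv\<^sup>2)\<close>.\<close>

section \<open>Partial derivatives\<close>

definition has_gradient ::
    "(real \<times> real \<Rightarrow> real) \<Rightarrow> (real \<times> real \<Rightarrow> real) \<Rightarrow> (real \<times> real \<Rightarrow> real) \<Rightarrow> real \<times> real \<Rightarrow> bool" where
  "has_gradient f fx fy p \<longleftrightarrow> (f has_derivative (\<lambda>h. fx p * fst h + fy p * snd h)) (at p)"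

lemma has_gradient_partials:
  assumes "has_gradient f fx fy (s, t)"
  shows "((\<lambda>s. f (s, t)) has_real_derivative fx (s, t)) (at s)"
    and "((\<lambda>t. f (s, t)) has_real_derivative fy (s, t)) (at t)"
proof -
  have "((\<lambda>s. (s, t)) has_derivative (\<lambda>u. (u, 0))) (at s)"
       "((\<lambda>t. (s, t)) has_derivative (\<lambda>u. (0, u))) (at t)"
    by (auto intro!: derivative_eq_intros)
  from this[THEN has_derivative_compose, OF assms[unfolded has_gradient_def]]
  show "((\<lambda>s. f (s, t)) has_real_derivative fx (s, t)) (at s)"
    and "((\<lambda>t. f (s, t)) has_real_derivative fy (s, t)) (at t)"
    by (simp_all add: has_field_derivative_def mult_commute_abs)
qed

lemma has_gradient_imp_px_py:
  assumes "has_gradient f fx fy p"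
  shows "px f p = fx p" and "py f p = fy p"
  using has_gradient_partials[of f fx fy "fst p" "snd p"] assms
  by (simp_all add: px_def py_def vector_derivative_at has_real_derivative_iff_has_vector_derivative)

lemma differentiable_imp_has_gradient:
  assumes "f differentiable (at p)"
  shows "has_gradient f (px f) (py f) p"
proof -
  obtain f' where f': "(f has_derivative f') (at p)"
    using assms unfolding differentiable_def by blast
  have "f' = (\<lambda>h. f' (1, 0) * fst h + f' (0, 1) * snd h)"
  proof
    fix h :: "real \<times> real"
    show "f' h = f' (1, 0) * fst h + f' (0, 1) * snd h"
      using linear_add[OF has_derivative_linear[OF f'], of "(fst h, 0)" "(0, snd h)"]
        linear_cmul[OF has_derivative_linear[OF f'], of "fst h" "(1, 0)"]
        linear_cmul[OF has_derivative_linear[OF f'], of "snd h" "(0, 1)"]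
      by (simp add: mult.commute)
  qed
  then have grad: "has_gradient f (\<lambda>_. f' (1, 0)) (\<lambda>_. f' (0, 1)) p"
    unfolding has_gradient_def using f' by metis
  with has_gradient_imp_px_py[OF grad] show ?thesis
    by (simp add: has_gradient_def)
qed

lemma has_gradient_const: "has_gradient (\<lambda>_. k) (\<lambda>_. 0) (\<lambda>_. 0) p"
  and has_gradient_fst: "has_gradient fst (\<lambda>_. 1) (\<lambda>_. 0) p"
  and has_gradient_snd: "has_gradient snd (\<lambda>_. 0) (\<lambda>_. 1) p"
  unfolding has_gradient_def by (auto intro!: derivative_eq_intros)

lemma has_gradient_add:
  "has_gradient f fx fy p \<Longrightarrow> has_gradient g gx gy p \<Longrightarrow>
    has_gradient (\<lambda>q. f q + g q) (\<lambda>q. fx q + gx q) (\<lambda>q. fy q + gy q) p"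
  unfolding has_gradient_def
  by (erule has_derivative_eq_rhs[OF has_derivative_add]) (auto simp: algebra_simps)

lemma has_gradient_diff:
  "has_gradient f fx fy p \<Longrightarrow> has_gradient g gx gy p \<Longrightarrow>
    has_gradient (\<lambda>q. f q - g q) (\<lambda>q. fx q - gx q) (\<lambda>q. fy q - gy q) p"
  unfolding has_gradient_def
  by (erule has_derivative_eq_rhs[OF has_derivative_diff]) (auto simp: algebra_simps)

lemma has_gradient_mult:
  "has_gradient f fx fy p \<Longrightarrow> has_gradient g gx gy p \<Longrightarrow>
    has_gradient (\<lambda>q. f q * g q) (\<lambda>q. fx q * g q + f q * gx q) (\<lambda>q. fy q * g q + f q * gy q) p"
  unfolding has_gradient_def
  by (erule has_derivative_eq_rhs[OF has_derivative_mult]) (auto simp: algebra_simps)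

lemma has_gradient_cong:
  "has_gradient f fx fy p \<Longrightarrow> fx p = gx p \<Longrightarrow> fy p = gy p \<Longrightarrow> has_gradient f gx gy p"
  by (simp add: has_gradient_def)

lemma has_gradient_div_sqrt:
  assumes f: "has_gradient f fx fy p" and g: "has_gradient g gx gy p" and pos: "g p > 0"
  shows "has_gradient (\<lambda>q. f q / sqrt (g q))
    (\<lambda>q. (2 * g q * fx q - f q * gx q) / (2 * g q * sqrt (g q)))
    (\<lambda>q. (2 * g q * fy q - f q * gy q) / (2 * g q * sqrt (g q))) p"
proof -
  have "((\<lambda>q. sqrt (g q)) has_derivative (\<lambda>h. (gx p * fst h + gy p * snd h) * (inverse (sqrt (g p)) / 2))) (at p)"
    using has_derivative_real_sqrt[OF pos g[unfolded has_gradient_def]] .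
  from has_derivative_divide[OF f[unfolded has_gradient_def] this] pos
  have "((\<lambda>q. f q / sqrt (g q)) has_derivative (\<lambda>h. - f p *
      (inverse (sqrt (g p)) * ((gx p * fst h + gy p * snd h) * (inverse (sqrt (g p)) / 2)) *
      inverse (sqrt (g p))) + (fx p * fst h + fy p * snd h) / sqrt (g p))) (at p)"
    by simp
  moreover obtain w where "sqrt (g p) = w" "g p = w * w" "w > 0"
    using pos by (intro that[of "sqrt (g p)"]) auto
  ultimately show ?thesis
    unfolding has_gradient_def
    by (elim has_derivative_eq_rhs) (simp add: fun_eq_iff field_simps)
qed

lemma Ck_on_Suc_imp_has_gradient:
  assumes "open M" "Ck_on (Suc k) M f" "p \<in> M"
  shows "has_gradient f (px f) (py f) p"
proof (rule differentiable_imp_has_gradient)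
  have "f differentiable_on M"
    using assms(2) unfolding Ck_on.simps by (elim conjE)
  then show "f differentiable (at p)"
    using assms(1,3) differentiable_on_eq_differentiable_at by blast
qed

lemma Ck_on_1I:
  assumes "open M" and f: "\<And>p. p \<in> M \<Longrightarrow> has_gradient f fx fy p"
    and fx: "continuous_on M fx" and fy: "continuous_on M fy"
  shows "Ck_on 1 M f"
proof -
  have "continuous_on M (px f)"
    using fx by (rule continuous_on_eq) (simp add: has_gradient_imp_px_py[OF f])
  moreover have "continuous_on M (py f)"
    using fy by (rule continuous_on_eq) (simp add: has_gradient_imp_px_py[OF f])
  moreover have "f differentiable_on M"
  proof (rule differentiable_at_imp_differentiable_on)
    fix p assume "p \<in> M"
    with f show "f differentiable (at p)"
      unfolding has_gradient_def differentiable_def by blast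
  qed
  ultimately show ?thesis
    unfolding One_nat_def Ck_on.simps by (simp add: differentiable_imp_continuous_on)
qed

lemma Ck_on_1_imp_has_gradient: "open M \<Longrightarrow> Ck_on 1 M f \<Longrightarrow> p \<in> M \<Longrightarrow> has_gradient f (px f) (py f) p"
  unfolding One_nat_def by (rule Ck_on_Suc_imp_has_gradient)

lemma Ck_on_1_continuous:
  assumes "Ck_on 1 M f"
  shows "continuous_on M f" "continuous_on M (px f)" "continuous_on M (py f)"
  using assms unfolding One_nat_def Ck_on.simps by blast+

lemma Ck_on_1_div_sqrt:
  assumes M: "open M" and P: "Ck_on 1 M P" and D: "Ck_on 1 M D" and pos: "\<forall>q\<in>M. D q > 0"
  shows "Ck_on 1 M (\<lambda>q. P q / sqrt (D q))"
    and "\<And>q. q \<in> M \<Longrightarrow> px (\<lambda>q. P q / sqrt (D q)) q = (2 * D q * px P q - P q * px D q) / (2 * D q * sqrt (D q))"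
    and "\<And>q. q \<in> M \<Longrightarrow> py (\<lambda>q. P q / sqrt (D q)) q = (2 * D q * py P q - P q * py D q) / (2 * D q * sqrt (D q))"
proof -
  have grad: "has_gradient (\<lambda>q. P q / sqrt (D q))
      (\<lambda>q. (2 * D q * px P q - P q * px D q) / (2 * D q * sqrt (D q)))
      (\<lambda>q. (2 * D q * py P q - P q * py D q) / (2 * D q * sqrt (D q))) q" if "q \<in> M" for q
    using Ck_on_1_imp_has_gradient[OF M P that] Ck_on_1_imp_has_gradient[OF M D that] pos that
    by (auto intro: has_gradient_div_sqrt)
  from Ck_on_1_continuous[OF P] Ck_on_1_continuous[OF D] pos show "Ck_on 1 M (\<lambda>q. P q / sqrt (D q))"
    by (intro Ck_on_1I[OF M grad] continuous_intros) auto
  show "px (\<lambda>q. P q / sqrt (D q)) q = (2 * D q * px P q - P q * px D q) / (2 * D q * sqrt (D q))"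
    and "py (\<lambda>q. P q / sqrt (D q)) q = (2 * D q * py P q - P q * py D q) / (2 * D q * sqrt (D q))"
    if "q \<in> M" for q
    using has_gradient_imp_px_py[OF grad[OF that]] by simp_all
qed

lemma Ck_on_1_det:
  assumes M: "open M" and E: "Ck_on 1 M E" and F: "Ck_on 1 M F" and G: "Ck_on 1 M G"
  shows "Ck_on 1 M (\<lambda>q. E q * G q - (F q)\<^sup>2)"
    and "\<And>q. q \<in> M \<Longrightarrow> px (\<lambda>q. E q * G q - (F q)\<^sup>2) q = px E q * G q + E q * px G q - 2 * F q * px F q"
    and "\<And>q. q \<in> M \<Longrightarrow> py (\<lambda>q. E q * G q - (F q)\<^sup>2) q = py E q * G q + E q * py G q - 2 * F q * py F q"
proof -
  have grad: "has_gradient (\<lambda>q. E q * G q - (F q)\<^sup>2)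
      (\<lambda>q. px E q * G q + E q * px G q - 2 * F q * px F q)
      (\<lambda>q. py E q * G q + E q * py G q - 2 * F q * py F q) q" if "q \<in> M" for q
    using has_gradient_diff[OF has_gradient_mult[OF Ck_on_1_imp_has_gradient[OF M E that]
          Ck_on_1_imp_has_gradient[OF M G that]]
        has_gradient_mult[OF Ck_on_1_imp_has_gradient[OF M F that] Ck_on_1_imp_has_gradient[OF M F that]]]
    unfolding power2_eq_square by (rule has_gradient_cong) (simp_all add: algebra_simps)
  from Ck_on_1_continuous[OF E] Ck_on_1_continuous[OF F] Ck_on_1_continuous[OF G]
  show "Ck_on 1 M (\<lambda>q. E q * G q - (F q)\<^sup>2)"
    by (intro Ck_on_1I[OF M grad] continuous_intros)
  show "px (\<lambda>q. E q * G q - (F q)\<^sup>2) q = px E q * G q + E q * px G q - 2 * F q * px F q"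
    and "py (\<lambda>q. E q * G q - (F q)\<^sup>2) q = py E q * G q + E q * py G q - 2 * F q * py F q"
    if "q \<in> M" for q
    using has_gradient_imp_px_py[OF grad[OF that]] by simp_all
qed

lemma has_gradient_swap:
  assumes "has_gradient f fx fy (snd q, fst q)"
  shows "has_gradient (\<lambda>q. f (snd q, fst q)) (\<lambda>q. fy (snd q, fst q)) (\<lambda>q. fx (snd q, fst q)) q"
proof -
  have "((\<lambda>q. (snd q, fst q)) has_derivative (\<lambda>h. (snd h, fst h))) (at q)"
    by (auto intro!: derivative_eq_intros)
  from has_derivative_compose[OF this assms[unfolded has_gradient_def]] show ?thesis
    by (simp add: has_gradient_def add.commute)
qed

lemma double_difference_eq_mixed_partial:
  fixes f fx fy fxx fxy :: "real \<times> real \<Rightarrow> real"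
  assumes h: "h > 0" and box: "{x..x+h} \<times> {y..y+h} \<subseteq> M"
    and df: "\<And>q. q \<in> M \<Longrightarrow> has_gradient f fx fy q"
    and dfx: "\<And>q. q \<in> M \<Longrightarrow> has_gradient fx fxx fxy q"
  shows "\<exists>\<xi> \<eta>. \<xi> \<in> {x<..<x+h} \<and> \<eta> \<in> {y<..<y+h} \<and>
    f (x+h, y+h) - f (x+h, y) - f (x, y+h) + f (x, y) = h * (h * fxy (\<xi>, \<eta>))"
proof -
  have "\<And>s. x \<le> s \<Longrightarrow> s \<le> x + h \<Longrightarrow>
      ((\<lambda>s. f (s, y+h) - f (s, y)) has_real_derivative fx (s, y+h) - fx (s, y)) (at s)"
    using h box by (intro DERIV_diff has_gradient_partials(1)[OF df]) auto
  from MVT2[of x "x + h" "\<lambda>s. f (s, y+h) - f (s, y)" "\<lambda>s. fx (s, y+h) - fx (s, y)", OF _ this]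
  obtain \<xi> where \<xi>: "x < \<xi>" "\<xi> < x + h"
    "f (x+h, y+h) - f (x+h, y) - (f (x, y+h) - f (x, y)) = h * (fx (\<xi>, y+h) - fx (\<xi>, y))"
    using h by auto
  have "\<And>t. y \<le> t \<Longrightarrow> t \<le> y + h \<Longrightarrow> ((\<lambda>t. fx (\<xi>, t)) has_real_derivative fxy (\<xi>, t)) (at t)"
    using \<xi> box by (intro has_gradient_partials(2)[OF dfx]) auto
  from MVT2[of y "y + h" "\<lambda>t. fx (\<xi>, t)" "\<lambda>t. fxy (\<xi>, t)", OF _ this]
  obtain \<eta> where "y < \<eta>" "\<eta> < y + h" "fx (\<xi>, y+h) - fx (\<xi>, y) = h * fxy (\<xi>, \<eta>)"
    using h by auto
  with \<xi> show ?thesis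
    by (intro exI[of _ \<xi>] exI[of _ \<eta>]) (simp add: algebra_simps)
qed

lemma mixed_partials_agree_in_square:
  fixes f fx fy fxx fxy fyx fyy :: "real \<times> real \<Rightarrow> real"
  assumes h: "h > 0" and box: "{x..x+h} \<times> {y..y+h} \<subseteq> M"
    and df: "\<And>q. q \<in> M \<Longrightarrow> has_gradient f fx fy q"
    and dfx: "\<And>q. q \<in> M \<Longrightarrow> has_gradient fx fxx fxy q"
    and dfy: "\<And>q. q \<in> M \<Longrightarrow> has_gradient fy fyx fyy q"
  obtains \<xi> \<eta> \<xi>' \<eta>' where "\<xi> \<in> {x<..<x+h}" "\<eta> \<in> {y<..<y+h}" "\<xi>' \<in> {x<..<x+h}" "\<eta>' \<in> {y<..<y+h}"
    and "fxy (\<xi>, \<eta>) = fyx (\<xi>', \<eta>')"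
proof -
  obtain \<xi> \<eta> where \<xi>\<eta>: "\<xi> \<in> {x<..<x+h}" "\<eta> \<in> {y<..<y+h}"
    "f (x+h, y+h) - f (x+h, y) - f (x, y+h) + f (x, y) = h * (h * fxy (\<xi>, \<eta>))"
    using double_difference_eq_mixed_partial[OF h box df dfx] by blast
  \<comment> \<open>The other order of differentiation is the same statement for \<open>f\<close> with swapped arguments.\<close>
  have box': "{y..y+h} \<times> {x..x+h} \<subseteq> {q. (snd q, fst q) \<in> M}"
    using box by auto
  have "has_gradient (\<lambda>q. f (snd q, fst q)) (\<lambda>q. fy (snd q, fst q)) (\<lambda>q. fx (snd q, fst q)) q"
    and "has_gradient (\<lambda>q. fy (snd q, fst q)) (\<lambda>q. fyy (snd q, fst q)) (\<lambda>q. fyx (snd q, fst q)) q"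
    if "q \<in> {q. (snd q, fst q) \<in> M}" for q
    using that by (simp_all add: has_gradient_swap df dfy)
  from double_difference_eq_mixed_partial[OF h box' this]
  obtain \<eta>' \<xi>' where \<xi>\<eta>': "\<eta>' \<in> {y<..<y+h}" "\<xi>' \<in> {x<..<x+h}"
    "f (x+h, y+h) - f (x, y+h) - f (x+h, y) + f (x, y) = h * (h * fyx (\<xi>', \<eta>'))"
    by auto
  have "fxy (\<xi>, \<eta>) = fyx (\<xi>', \<eta>')"
    using \<xi>\<eta>(3) \<xi>\<eta>'(3) h by (simp add: algebra_simps)
  from that[OF \<xi>\<eta>(1,2) \<xi>\<eta>'(2,1) this] show thesis .
qed

lemma mixed_partials_eq:
  fixes f fx fy fxx fxy fyx fyy :: "real \<times> real \<Rightarrow> real"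
  assumes M: "open M" and p: "p \<in> M"
    and df: "\<And>q. q \<in> M \<Longrightarrow> has_gradient f fx fy q"
    and dfx: "\<And>q. q \<in> M \<Longrightarrow> has_gradient fx fxx fxy q"
    and dfy: "\<And>q. q \<in> M \<Longrightarrow> has_gradient fy fyx fyy q"
    and cont: "continuous_on M fxy" "continuous_on M fyx"
  shows "fxy p = fyx p"
proof -
  have "\<bar>fxy p - fyx p\<bar> < e" if e: "e > 0" for e
  proof -
    have "(fxy \<longlongrightarrow> fxy p) (nhds p)" "(fyx \<longlongrightarrow> fyx p) (nhds p)"
      using cont M p by (simp_all add: continuous_on_eq_continuous_at isCont_def tendsto_at_iff_tendsto_nhds)
    then have "\<forall>\<^sub>F q in nhds p. q \<in> M \<and> dist (fxy q) (fxy p) < e / 2 \<and> dist (fyx q) (fyx p) < e / 2"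
      using e M p by (intro eventually_conj eventually_nhds_in_open tendstoD) auto
    then obtain d where "d > 0" and d: "\<And>q. dist q p < d \<Longrightarrow>
        q \<in> M \<and> \<bar>fxy q - fxy p\<bar> < e / 2 \<and> \<bar>fyx q - fyx p\<bar> < e / 2"
      unfolding eventually_nhds_metric dist_real_def by blast
    obtain x y where xy: "p = (x, y)"
      by fastforce
    define h where "h = d / 2"
    have h: "h > 0"
      using \<open>d > 0\<close> by (simp add: h_def)
    have near: "dist (s, t) p < d" if "s \<in> {x..x+h}" "t \<in> {y..y+h}" for s t
    proof -
      have "(s - x)\<^sup>2 + (t - y)\<^sup>2 \<le> h\<^sup>2 + h\<^sup>2"
        using that by (intro add_mono power_mono) auto
      also have "\<dots> < d\<^sup>2"
        using h by (simp add: h_def power2_eq_square)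
      finally have "sqrt ((s - x)\<^sup>2 + (t - y)\<^sup>2) < sqrt (d\<^sup>2)"
        by (rule real_sqrt_less_mono)
      then show ?thesis
        using \<open>d > 0\<close> by (simp add: xy dist_Pair_Pair dist_real_def)
    qed
    have "{x..x+h} \<times> {y..y+h} \<subseteq> M"
      using d[OF near] by force
    then obtain \<xi> \<eta> \<xi>' \<eta>' where "\<xi> \<in> {x<..<x+h}" "\<eta> \<in> {y<..<y+h}" "\<xi>' \<in> {x<..<x+h}" "\<eta>' \<in> {y<..<y+h}"
      and eq: "fxy (\<xi>, \<eta>) = fyx (\<xi>', \<eta>')"
      by (rule mixed_partials_agree_in_square[OF h _ df dfx dfy]) blast
    then have "dist (\<xi>, \<eta>) p < d" "dist (\<xi>', \<eta>') p < d"
      using near by auto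
    then have "\<bar>fxy (\<xi>, \<eta>) - fxy p\<bar> < e / 2" "\<bar>fyx (\<xi>', \<eta>') - fyx p\<bar> < e / 2"
      using d by blast+
    with eq show ?thesis
      by linarith
  qed
  from this[of "\<bar>fxy p - fyx p\<bar>"] show ?thesis
    by auto
qed

lemma smooth_on_px: "smooth_on M f \<Longrightarrow> smooth_on M (px f)"
  and smooth_on_py: "smooth_on M f \<Longrightarrow> smooth_on M (py f)"
proof -
  assume "smooth_on M f"
  then have "Ck_on (Suc k) M f" for k
    unfolding smooth_on_def by blast
  then show "smooth_on M (px f)" "smooth_on M (py f)"
    unfolding smooth_on_def Ck_on.simps by blast+
qed

lemma smooth_on_continuous: "smooth_on M f \<Longrightarrow> continuous_on M f"
  unfolding smooth_on_def using Ck_on.simps(1) by blast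

lemma smooth_on_has_gradient:
  assumes "open M" "smooth_on M f" "p \<in> M"
  shows "has_gradient f (px f) (py f) p"
  using assms(2) unfolding smooth_on_def using Ck_on_Suc_imp_has_gradient[OF assms(1) _ assms(3)] by blast

lemma smooth_on_mixed_partials_eq:
  assumes M: "open M" and f: "smooth_on M f" and p: "p \<in> M"
  shows "py (px f) p = px (py f) p"
  using M p smooth_on_has_gradient[OF M f] smooth_on_has_gradient[OF M smooth_on_px[OF f]]
    smooth_on_has_gradient[OF M smooth_on_py[OF f]]
    smooth_on_continuous[OF smooth_on_py[OF smooth_on_px[OF f]]]
    smooth_on_continuous[OF smooth_on_px[OF smooth_on_py[OF f]]]
  by (rule mixed_partials_eq)

lemma smooth_on_has_gradient_partials:
  assumes "open M" "smooth_on M f" "p \<in> M"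
  shows "has_gradient (px f) (px (px f)) (py (px f)) p"
    and "has_gradient (py f) (py (px f)) (py (py f)) p"
  using smooth_on_has_gradient[OF assms(1) smooth_on_px[OF assms(2)] assms(3)]
    smooth_on_has_gradient[OF assms(1) smooth_on_py[OF assms(2)] assms(3)]
    smooth_on_mixed_partials_eq[OF assms]
  by (simp_all add: has_gradient_def)

section \<open>Closed forms on simply connected domains\<close>

text \<open>\<open>a\<close> and \<open>b\<close> are the Wirtinger derivatives \<open>\<partial>f/\<partial>z\<close> and \<open>\<partial>f/\<partial>z\<^sup>*\<close>; the exterior derivative of the real
  1-form \<open>Re (f dz)\<close> is \<open>-2 Im b dx \<and> dy\<close>, so \<open>closed_Re_form S f\<close> says that this form is \<open>C\<^sup>1\<close> and closed.\<close>
definition closed_Re_form :: "complex set \<Rightarrow> (complex \<Rightarrow> complex) \<Rightarrow> bool" where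
  "closed_Re_form S f \<longleftrightarrow> (\<exists>a b. continuous_on S a \<and> continuous_on S b \<and>
    (\<forall>z\<in>S. (f has_derivative (\<lambda>h. a z * h + b z * cnj h)) (at z) \<and> Im (b z) = 0))"

lemma radial_derivative_has_integral:
  fixes f a b :: "complex \<Rightarrow> complex"
  assumes f: "\<And>z. z \<in> S \<Longrightarrow> (f has_derivative (\<lambda>h. a z * h + b z * cnj h)) (at z)"
    and w: "\<And>t. t \<in> {0..1} \<Longrightarrow> t *\<^sub>R w \<in> S"
  shows "((\<lambda>t. t *\<^sub>R (a (t *\<^sub>R w) * w + b (t *\<^sub>R w) * cnj w) + f (t *\<^sub>R w)) has_integral f w) {0..1}"
proof -
  have "((\<lambda>t. t *\<^sub>R f (t *\<^sub>R w)) has_vector_derivative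
      t *\<^sub>R (a (t *\<^sub>R w) * w + b (t *\<^sub>R w) * cnj w) + f (t *\<^sub>R w)) (at t within {0..1})"
    if "t \<in> {0..1}" for t
  proof -
    have "((\<lambda>t. t *\<^sub>R w) has_derivative (\<lambda>s. s *\<^sub>R w)) (at t within {0..1})"
      by (auto intro!: derivative_eq_intros)
    note chain = has_derivative_compose[OF this f[OF w[OF that]]]
    show ?thesis
      unfolding has_vector_derivative_def
      by (rule has_derivative_eq_rhs, (rule derivative_eq_intros chain | simp)+)
         (simp add: fun_eq_iff algebra_simps scaleR_conv_of_real)
  qed
  from fundamental_theorem_of_calculus[OF _ this] show ?thesis
    by simp
qed

lemma continuous_on_radial:
  fixes g :: "'a::real_normed_vector \<Rightarrow> 'b::topological_space"
  assumes "continuous_on S g" and "\<And>x t. x \<in> U \<Longrightarrow> t \<in> cbox 0 1 \<Longrightarrow> t *\<^sub>R x \<in> S"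
  shows "continuous_on (U \<times> cbox 0 1) (\<lambda>z. g (snd z *\<^sub>R fst z))"
proof (rule continuous_on_compose2[OF assms(1)])
  show "continuous_on (U \<times> cbox 0 1) (\<lambda>z. snd z *\<^sub>R fst z)"
    by (intro continuous_intros)
  show "(\<lambda>z. snd z *\<^sub>R fst z) ` (U \<times> cbox 0 1) \<subseteq> S"
    using assms(2) by auto
qed

lemma radial_integral_has_derivative:
  fixes f a b :: "complex \<Rightarrow> complex"
  assumes f: "\<And>z. z \<in> S \<Longrightarrow> (f has_derivative (\<lambda>h. a z * h + b z * cnj h)) (at z)"
    and real: "\<And>z. z \<in> S \<Longrightarrow> Im (b z) = 0" and ca: "continuous_on S a" and cb: "continuous_on S b"
    and U: "convex U" "w \<in> U" and tU: "\<And>x t. x \<in> U \<Longrightarrow> t \<in> cbox 0 1 \<Longrightarrow> t *\<^sub>R x \<in> S"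
  shows "((\<lambda>x. integral (cbox 0 1) (\<lambda>t. Re (f (t *\<^sub>R x) * x))) has_derivative (\<lambda>k. Re (f w * k)))
    (at w within U)"
proof -
  have cf: "continuous_on S f"
    using f by (meson continuous_at_imp_continuous_on has_derivative_continuous)
  define C where "C x t = t *\<^sub>R (a (t *\<^sub>R x) * x + b (t *\<^sub>R x) * cnj x) + f (t *\<^sub>R x)" for x t
  have cC: "continuous_on (U \<times> cbox 0 1) (\<lambda>z. C (fst z) (snd z))"
    unfolding C_def using continuous_on_radial[OF ca tU] continuous_on_radial[OF cb tU]
      continuous_on_radial[OF cf tU]
    by (intro continuous_intros) auto
  \<comment> \<open>Because \<open>b\<close> is real, the derivative of \<open>x \<mapsto> Re (f (t x) x)\<close> is \<open>k \<mapsto> Re (C x t k)\<close>,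
    where \<open>C x t\<close> is the \<open>t\<close>-derivative of \<open>t f (t x)\<close>.\<close>
  have lb: "((\<lambda>x. integral (cbox 0 1) (\<lambda>t. Re (f (t *\<^sub>R x) * x))) has_derivative
      blinfun_apply (integral (cbox 0 1) (\<lambda>t. blinfun_inner_left (cnj (C w t))))) (at w within U)"
  proof (rule leibniz_rule)
    fix x and t :: real
    assume x: "x \<in> U" and t: "t \<in> cbox 0 1"
    have "((\<lambda>x. t *\<^sub>R x) has_derivative (\<lambda>k. t *\<^sub>R k)) (at x within U)"
      by (auto intro!: derivative_eq_intros)
    note chain = has_derivative_compose[OF this f[OF tU[OF x t]]]
    show "((\<lambda>x. Re (f (t *\<^sub>R x) * x)) has_derivative blinfun_apply (blinfun_inner_left (cnj (C x t))))
        (at x within U)"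
      by (rule has_derivative_eq_rhs, (rule derivative_eq_intros chain | simp)+)
        (use real[OF tU[OF x t]] in \<open>simp add: fun_eq_iff C_def inner_complex_def algebra_simps\<close>)
  next
    fix x
    assume "x \<in> U"
    then have "(\<lambda>t. t *\<^sub>R x) ` cbox 0 1 \<subseteq> S"
      using tU by auto
    then show "(\<lambda>t. Re (f (t *\<^sub>R x) * x)) integrable_on cbox 0 1"
      by (intro integrable_continuous continuous_intros continuous_on_compose2[OF cf]) auto
  next
    show "continuous_on (U \<times> cbox 0 1) (\<lambda>(x, t). blinfun_inner_left (cnj (C x t)))"
      unfolding split_beta by (intro continuous_intros cC)
  qed (use U in auto)
  have "continuous_on (cbox 0 1) (\<lambda>t. C w t)"
    using U by (intro continuous_on_compose2[OF cC, of _ "\<lambda>t. (w, t)", simplified] continuous_intros) auto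
  then have "(\<lambda>t. blinfun_inner_left (cnj (C w t))) integrable_on cbox 0 1"
    by (intro integrable_continuous continuous_intros)
  then have "blinfun_apply (integral (cbox 0 1) (\<lambda>t. blinfun_inner_left (cnj (C w t)))) k
      = integral (cbox 0 1) (\<lambda>t. k \<bullet> cnj (C w t))" for k
    by (simp only: blinfun_apply_integral blinfun_inner_left.rep_eq)
  also have "\<dots> k = k \<bullet> cnj (f w)" for k
    using has_integral_linear[OF radial_derivative_has_integral[OF f tU[OF U(2)]], of "\<lambda>c. k \<bullet> cnj c"]
    by (simp add: C_def o_def bounded_linear_inner_right_comp bounded_linear_cnj integral_unique)
  finally show ?thesis
    using lb by (elim has_derivative_eq_rhs) (simp add: fun_eq_iff inner_complex_def)
qed

lemma closed_Re_form_exact_starlike: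
  assumes "open S" and star: "\<And>w t. w \<in> S \<Longrightarrow> t \<in> {0..1} \<Longrightarrow> t *\<^sub>R w \<in> S"
    and "closed_Re_form S f"
  shows "\<exists>\<Psi>. \<forall>w\<in>S. (\<Psi> has_derivative (\<lambda>k. Re (f w * k))) (at w)"
proof -
  obtain a b where ca: "continuous_on S a" and cb: "continuous_on S b"
    and f: "\<And>z. z \<in> S \<Longrightarrow> (f has_derivative (\<lambda>h. a z * h + b z * cnj h)) (at z)"
    and real: "\<And>z. z \<in> S \<Longrightarrow> Im (b z) = 0"
    using assms(3) unfolding closed_Re_form_def by blast
  have "((\<lambda>x. integral (cbox 0 1) (\<lambda>t. Re (f (t *\<^sub>R x) * x))) has_derivative (\<lambda>k. Re (f w * k))) (at w)"
    if "w \<in> S" for w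
  proof -
    obtain r where r: "r > 0" "ball w r \<subseteq> S"
      using \<open>open S\<close> \<open>w \<in> S\<close> open_contains_ball by blast
    have "t *\<^sub>R x \<in> S" if "x \<in> ball w r" "t \<in> cbox 0 1" for x t
      using star that r(2) by auto
    with r(1) have "((\<lambda>x. integral (cbox 0 1) (\<lambda>t. Re (f (t *\<^sub>R x) * x))) has_derivative
        (\<lambda>k. Re (f w * k))) (at w within ball w r)"
      by (intro radial_integral_has_derivative[OF f real ca cb convex_ball]) auto
    then show ?thesis
      using at_within_open[OF _ open_ball, of w w r] r(1) by simp
  qed
  then show ?thesis
    by blast
qed

lemma closed_Re_form_holomorphic_pullback:
  assumes "closed_Re_form S f" and T: "open T" and g: "g holomorphic_on T" and gT: "g ` T \<subseteq> S"
  shows "closed_Re_form T (\<lambda>w. f (g w) * deriv g w)"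
proof -
  obtain a b where ca: "continuous_on S a" and cb: "continuous_on S b"
    and f: "\<And>z. z \<in> S \<Longrightarrow> (f has_derivative (\<lambda>h. a z * h + b z * cnj h)) (at z)"
    and real: "\<And>z. z \<in> S \<Longrightarrow> Im (b z) = 0"
    using assms(1) unfolding closed_Re_form_def by blast
  have cf: "continuous_on S f"
    using f by (meson continuous_at_imp_continuous_on has_derivative_continuous)
  have g': "deriv g holomorphic_on T" and g'': "deriv (deriv g) holomorphic_on T"
    using g T by (auto intro: holomorphic_deriv)
  have cg: "continuous_on T g"
    using g holomorphic_on_imp_continuous_on by blast
  have dg: "(g has_derivative (\<lambda>k. deriv g w * k)) (at w)"
    and dg': "(deriv g has_derivative (\<lambda>k. deriv (deriv g) w * k)) (at w)" if "w \<in> T" for w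
    using holomorphic_derivI[OF g T that] holomorphic_derivI[OF g' T that]
    by (simp_all add: has_field_derivative_def)
  show ?thesis
    unfolding closed_Re_form_def
  proof (intro exI conjI ballI)
    show "continuous_on T (\<lambda>w. a (g w) * (deriv g w)\<^sup>2 + f (g w) * deriv (deriv g) w)"
      using continuous_on_compose2[OF ca cg gT] continuous_on_compose2[OF cf cg gT]
        holomorphic_on_imp_continuous_on[OF g'] holomorphic_on_imp_continuous_on[OF g'']
      by (intro continuous_intros)
    show "continuous_on T (\<lambda>w. b (g w) * (cnj (deriv g w) * deriv g w))"
      using continuous_on_compose2[OF cb cg gT] holomorphic_on_imp_continuous_on[OF g']
      by (intro continuous_intros)
    fix w
    assume w: "w \<in> T"
    then have gw: "g w \<in> S"
      using gT by auto
    show "((\<lambda>w. f (g w) * deriv g w) has_derivative (\<lambda>h.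
        (a (g w) * (deriv g w)\<^sup>2 + f (g w) * deriv (deriv g) w) * h +
        b (g w) * (cnj (deriv g w) * deriv g w) * cnj h)) (at w)"
      using has_derivative_mult[OF has_derivative_compose[OF dg[OF w] f[OF gw]] dg'[OF w]]
      by (elim has_derivative_eq_rhs) (simp add: fun_eq_iff algebra_simps power2_eq_square)
    show "Im (b (g w) * (cnj (deriv g w) * deriv g w)) = 0"
      using real[OF gw] by (simp add: algebra_simps)
  qed
qed

lemma deriv_left_inverse:
  assumes S: "open S" and T: "open T" and \<phi>: "\<phi> holomorphic_on S" and g: "g holomorphic_on T"
    and z: "z \<in> S" "\<phi> z \<in> T" and inv: "\<And>z. z \<in> S \<Longrightarrow> g (\<phi> z) = z"
  shows "deriv g (\<phi> z) * deriv \<phi> z = 1"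
proof -
  have "((\<lambda>z. g (\<phi> z)) has_field_derivative deriv g (\<phi> z) * deriv \<phi> z) (at z)"
    using DERIV_chain2[OF holomorphic_derivI[OF g T z(2)] holomorphic_derivI[OF \<phi> S z(1)]] by simp
  moreover have "((\<lambda>z. g (\<phi> z)) has_field_derivative 1) (at z)"
    using inv by (intro has_field_derivative_transform_within_open[OF DERIV_ident S z(1)]) simp
  ultimately show ?thesis
    by (rule DERIV_unique)
qed

lemma closed_Re_form_exact_simply_connected:
  assumes S: "open S" and "simply_connected S" and f: "closed_Re_form S f"
  shows "\<exists>\<Phi>. \<forall>z\<in>S. (\<Phi> has_derivative (\<lambda>h. Re (f z * h))) (at z)"
proof -
  consider "S = {}" | "S = UNIV"
    | \<phi> g where "\<phi> holomorphic_on S" "g holomorphic_on ball 0 1"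
        "\<And>z. z \<in> S \<Longrightarrow> \<phi> z \<in> ball 0 1 \<and> g (\<phi> z) = z"
        "\<And>z. z \<in> ball 0 1 \<Longrightarrow> g z \<in> S \<and> \<phi> (g z) = z"
    using assms(2) simply_connected_eq_biholomorphic_to_disc[OF S] by blast
  then show ?thesis
  proof cases
    case 1
    then show ?thesis
      by simp
  next
    case 2
    then show ?thesis
      using closed_Re_form_exact_starlike[OF S _ f] by simp
  next
    case (3 \<phi> g)
    have "t *\<^sub>R w \<in> ball 0 1" if "w \<in> ball (0::complex) 1" "t \<in> {0..1}" for w t
      using that mult_left_le_one_le[of "norm w" t] by auto
    moreover have "closed_Re_form (ball 0 1) (\<lambda>w. f (g w) * deriv g w)"
      using 3 by (intro closed_Re_form_holomorphic_pullback[OF f]) auto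
    ultimately obtain \<Psi> where \<Psi>: "\<And>w. w \<in> ball 0 1 \<Longrightarrow>
        (\<Psi> has_derivative (\<lambda>k. Re (f (g w) * deriv g w * k))) (at w)"
      using closed_Re_form_exact_starlike[of "ball 0 1"] by blast
    have "((\<Psi> \<circ> \<phi>) has_derivative (\<lambda>h. Re (f z * h))) (at z)" if z: "z \<in> S" for z
    proof -
      have \<phi>z: "\<phi> z \<in> ball 0 1"
        using 3 z by blast
      have "f (g (\<phi> z)) * deriv g (\<phi> z) * (deriv \<phi> z * h) = f z * h" for h
        using 3(3)[OF z] deriv_left_inverse[OF S open_ball 3(1,2) z \<phi>z] 3(3)
        by (simp add: mult.assoc[symmetric])
      with has_derivative_compose[OF holomorphic_derivI[OF 3(1) S z, unfolded has_field_derivative_def]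
          \<Psi>[OF \<phi>z]]
      show ?thesis
        by (simp add: o_def)
    qed
    then show ?thesis
      by blast
  qed
qed

text \<open>The real form \<open>P dx + Q dy\<close> is \<open>Re (f dz)\<close> for \<open>f = P - i Q\<close>, and \<open>Im (\<partial>f/\<partial>z\<^sup>*) = (P\<^sub>y - Q\<^sub>x) / 2\<close>.\<close>
lemma closed_Re_form_of_closed_form:
  assumes M: "open M" and P: "Ck_on 1 M P" and Q: "Ck_on 1 M Q"
    and closed: "\<And>p. p \<in> M \<Longrightarrow> py P p = px Q p"
  shows "closed_Re_form ((\<lambda>z. (Re z, Im z)) -` M) (\<lambda>z. Complex (P (Re z, Im z)) (- Q (Re z, Im z)))"
proof -
  define pt where "pt z = (Re z, Im z)" for z
  define fz fw where "fz q = Complex (px P q) (- px Q q)" and "fw q = Complex (py P q) (- py Q q)" for q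
  have lin_pt: "bounded_linear pt"
    unfolding pt_def by (intro bounded_linear_Pair bounded_linear_Re bounded_linear_Im)
  have "closed_Re_form (pt -` M) (\<lambda>z. Complex (P (pt z)) (- Q (pt z)))"
    unfolding closed_Re_form_def
  proof (intro exI conjI ballI)
    have cpt: "continuous_on (pt -` M) pt" and ptS: "pt ` (pt -` M) \<subseteq> M"
      using lin_pt by (auto simp: linear_continuous_on)
    show "continuous_on (pt -` M) (\<lambda>z. (fz (pt z) - \<i> * fw (pt z)) / 2)"
      and "continuous_on (pt -` M) (\<lambda>z. (fz (pt z) + \<i> * fw (pt z)) / 2)"
      unfolding fz_def fw_def using Ck_on_1_continuous[OF P] Ck_on_1_continuous[OF Q]
      by (auto intro!: continuous_intros continuous_on_compose2[OF _ cpt ptS])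
    fix z
    assume "z \<in> pt -` M"
    then have z: "pt z \<in> M"
      by simp
    have "(pt has_derivative pt) (at z)"
      using lin_pt by (rule bounded_linear_imp_has_derivative)
    note chain = this[THEN has_derivative_compose,
        OF Ck_on_1_imp_has_gradient[OF M _ z, unfolded has_gradient_def]]
    have d: "((\<lambda>z. of_real (P (pt z)) - \<i> * of_real (Q (pt z))) has_derivative (\<lambda>h.
        of_real (px P (pt z) * Re h + py P (pt z) * Im h) -
        \<i> * of_real (px Q (pt z) * Re h + py Q (pt z) * Im h))) (at z)"
      using chain[OF P] chain[OF Q] by (intro derivative_intros) (simp_all add: pt_def)
    have "(\<lambda>z. Complex (P (pt z)) (- Q (pt z))) = (\<lambda>z. of_real (P (pt z)) - \<i> * of_real (Q (pt z)))"
      by (simp add: fun_eq_iff complex_eq_iff)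
    then show "((\<lambda>z. Complex (P (pt z)) (- Q (pt z))) has_derivative
        (\<lambda>h. (fz (pt z) - \<i> * fw (pt z)) / 2 * h + (fz (pt z) + \<i> * fw (pt z)) / 2 * cnj h)) (at z)"
      using d by (simp, elim has_derivative_eq_rhs)
        (auto simp: fun_eq_iff complex_eq_iff fz_def fw_def algebra_simps add_divide_distrib[symmetric])
    show "Im ((fz (pt z) + \<i> * fw (pt z)) / 2) = 0"
      using closed[OF z] by (simp add: fz_def fw_def)
  qed
  then show ?thesis
    unfolding pt_def[abs_def] .
qed

lemma closed_form_has_primitive:
  assumes M: "open M" and "simply_connected M" and P: "Ck_on 1 M P" and Q: "Ck_on 1 M Q"
    and closed: "\<And>p. p \<in> M \<Longrightarrow> py P p = px Q p"
  shows "\<exists>\<Phi>. \<forall>p\<in>M. (\<Phi> has_derivative (\<lambda>h. P p * fst h + Q p * snd h)) (at p)"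
proof -
  define S where "S = (\<lambda>z. (Re z, Im z)) -` M"
  have "open S"
    unfolding S_def using M
    by (intro continuous_open_vimage linear_continuous_at bounded_linear_Pair bounded_linear_Re
        bounded_linear_Im)
  moreover have "simply_connected S"
  proof -
    have "S = (\<lambda>p. Complex (fst p) (snd p)) ` M"
      by (auto simp: S_def image_iff complex_eq_iff intro!: bexI[of _ "(Re _, Im _)"])
    moreover have "linear (\<lambda>p. Complex (fst p) (snd p))" "inj (\<lambda>p. Complex (fst p) (snd p))"
      by (auto simp: linear_iff inj_on_def complex_eq_iff)
    ultimately show ?thesis
      using assms(2) homeomorphic_simply_connected linear_homeomorphic_image by blast
  qed
  moreover note closed_Re_form_of_closed_form[OF M P Q closed, folded S_def]
  ultimately obtain \<Phi> where \<Phi>: "\<And>z. z \<in> S \<Longrightarrow>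
      (\<Phi> has_derivative (\<lambda>h. Re (Complex (P (Re z, Im z)) (- Q (Re z, Im z)) * h))) (at z)"
    using closed_Re_form_exact_simply_connected by blast
  have "((\<lambda>p. \<Phi> (Complex (fst p) (snd p))) has_derivative (\<lambda>h. P p * fst h + Q p * snd h)) (at p)"
    if "p \<in> M" for p
  proof -
    have "((\<lambda>p. Complex (fst p) (snd p)) has_derivative (\<lambda>h. Complex (fst h) (snd h))) (at p)"
      unfolding Complex_eq by (auto intro!: derivative_eq_intros)
    from has_derivative_compose[OF this \<Phi>] that show ?thesis
      by (simp add: S_def)
  qed
  then show ?thesis
    by blast
qed

section \<open>Minimal graphs\<close>

lemma mk4_nth [simp]: "mk4 a b c d $ 1 = a" "mk4 a b c d $ 2 = b" "mk4 a b c d $ 3 = c" "mk4 a b c d $ 4 = d"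
  by (simp_all add: mk4_def)

lemma lip_mk4 [simp]: "lip (mk4 a b c d) (mk4 a' b' c' d') = - (a * a') + b * b' + c * c' + d * d'"
  by (simp add: lip_def)

lemma mk4_axis: "mk4 a b c d = a *\<^sub>R axis 1 1 + b *\<^sub>R axis 2 1 + c *\<^sub>R axis 3 1 + d *\<^sub>R axis 4 1"
proof -
  have "mk4 a b c d $ i = (a *\<^sub>R axis 1 1 + b *\<^sub>R axis 2 1 + c *\<^sub>R axis 3 1 + d *\<^sub>R axis 4 1) $ i" for i :: 4
    using exhaust_4[of i] by (auto simp: axis_def)
  then show ?thesis
    by (simp add: vec_eq_iff)
qed

lemma mk4_has_vector_derivative:
  assumes "(f1 has_real_derivative a) (at t)" "(f2 has_real_derivative b) (at t)"
    "(f3 has_real_derivative c) (at t)" "(f4 has_real_derivative d) (at t)"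
  shows "((\<lambda>t. mk4 (f1 t) (f2 t) (f3 t) (f4 t)) has_vector_derivative mk4 a b c d) (at t)"
  unfolding mk4_axis using assms
  by (intro has_vector_derivative_add has_vector_derivative_scaleR[OF _ has_vector_derivative_const, simplified])

lemma px_py_mk4:
  assumes "has_gradient f1 g1 h1 p" "has_gradient f2 g2 h2 p"
    "has_gradient f3 g3 h3 p" "has_gradient f4 g4 h4 p"
  shows "px (\<lambda>q. mk4 (f1 q) (f2 q) (f3 q) (f4 q)) p = mk4 (g1 p) (g2 p) (g3 p) (g4 p)"
    and "py (\<lambda>q. mk4 (f1 q) (f2 q) (f3 q) (f4 q)) p = mk4 (h1 p) (h2 p) (h3 p) (h4 p)"
proof -
  obtain s t where p: "p = (s, t)"
    by fastforce
  have "((\<lambda>s. mk4 (f1 (s, t)) (f2 (s, t)) (f3 (s, t)) (f4 (s, t))) has_vector_derivative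
      mk4 (g1 p) (g2 p) (g3 p) (g4 p)) (at s)"
    and "((\<lambda>t. mk4 (f1 (s, t)) (f2 (s, t)) (f3 (s, t)) (f4 (s, t))) has_vector_derivative
      mk4 (h1 p) (h2 p) (h3 p) (h4 p)) (at t)"
    using assms unfolding p by (intro mk4_has_vector_derivative has_gradient_partials; simp)+
  then show "px (\<lambda>q. mk4 (f1 q) (f2 q) (f3 q) (f4 q)) p = mk4 (g1 p) (g2 p) (g3 p) (g4 p)"
    and "py (\<lambda>q. mk4 (f1 q) (f2 q) (f3 q) (f4 q)) p = mk4 (h1 p) (h2 p) (h3 p) (h4 p)"
    unfolding px_def py_def p by (simp_all add: vector_derivative_at)
qed

lemma px_py_cong_open:
  assumes M: "open M" and p: "p \<in> M" and eq: "\<And>q. q \<in> M \<Longrightarrow> f q = g q"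
  shows "px f p = px g p" and "py f p = py g p"
proof -
  have o1: "open ((\<lambda>t. (t, snd p)) -` M)" and o2: "open ((\<lambda>t. (fst p, t)) -` M)"
    using M by (auto intro!: continuous_open_vimage continuous_intros)
  have "\<forall>\<^sub>F t in nhds (fst p). f (t, snd p) = g (t, snd p)"
    using eventually_nhds_in_open[OF o1, of "fst p"] p by (auto elim!: eventually_mono intro: eq)
  moreover have "\<forall>\<^sub>F t in nhds (snd p). f (fst p, t) = g (fst p, t)"
    using eventually_nhds_in_open[OF o2, of "snd p"] p by (auto elim!: eventually_mono intro: eq)
  ultimately show "px f p = px g p" "py f p = py g p"
    unfolding px_def py_def by (auto intro!: vector_derivative_cong_eq[where A = UNIV and B = UNIV, simplified])
qed

lemma graph1_partials:
  assumes M: "open M" and A: "smooth_on M A" and B: "smooth_on M B" and p: "p \<in> M"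
  shows "px (graph1 A B) p = mk4 (px A p) 1 0 (px B p)"
    and "py (graph1 A B) p = mk4 (py A p) 0 1 (py B p)"
    and "px (px (graph1 A B)) p = mk4 (px (px A) p) 0 0 (px (px B) p)"
    and "py (px (graph1 A B)) p = mk4 (py (px A) p) 0 0 (py (px B) p)"
    and "py (py (graph1 A B)) p = mk4 (py (py A) p) 0 0 (py (py B) p)"
proof -
  have X: "graph1 A B = (\<lambda>q. mk4 (A q) (fst q) (snd q) (B q))"
    by (simp add: fun_eq_iff graph1_def)
  note grad = smooth_on_has_gradient[OF M]
  have Xx: "px (graph1 A B) q = mk4 (px A q) 1 0 (px B q)"
    and Xy: "py (graph1 A B) q = mk4 (py A q) 0 1 (py B q)" if "q \<in> M" for q
    unfolding X using px_py_mk4[OF grad[OF A that] has_gradient_fst has_gradient_snd grad[OF B that]]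
    by simp_all
  show "px (graph1 A B) p = mk4 (px A p) 1 0 (px B p)" "py (graph1 A B) p = mk4 (py A p) 0 1 (py B p)"
    using Xx Xy p by simp_all
  show "px (px (graph1 A B)) p = mk4 (px (px A) p) 0 0 (px (px B) p)"
    "py (px (graph1 A B)) p = mk4 (py (px A) p) 0 0 (py (px B) p)"
    using px_py_cong_open[OF M p Xx] px_py_mk4[OF grad[OF smooth_on_px[OF A] p] has_gradient_const
        has_gradient_const grad[OF smooth_on_px[OF B] p]]
    by simp_all
  show "py (py (graph1 A B)) p = mk4 (py (py A) p) 0 0 (py (py B) p)"
    using px_py_cong_open(2)[OF M p Xy] px_py_mk4(2)[OF grad[OF smooth_on_py[OF A] p] has_gradient_const
        has_gradient_const grad[OF smooth_on_py[OF B] p]]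
    by simp
qed

lemma graph2_partials:
  assumes M: "open M" and A: "smooth_on M A" and B: "smooth_on M B" and p: "p \<in> M"
  shows "px (graph2 A B) p = mk4 1 (px A p) (px B p) 0"
    and "py (graph2 A B) p = mk4 0 (py A p) (py B p) 1"
    and "px (px (graph2 A B)) p = mk4 0 (px (px A) p) (px (px B) p) 0"
    and "py (px (graph2 A B)) p = mk4 0 (py (px A) p) (py (px B) p) 0"
    and "py (py (graph2 A B)) p = mk4 0 (py (py A) p) (py (py B) p) 0"
proof -
  have X: "graph2 A B = (\<lambda>q. mk4 (fst q) (A q) (B q) (snd q))"
    by (simp add: fun_eq_iff graph2_def)
  note grad = smooth_on_has_gradient[OF M]
  have Xx: "px (graph2 A B) q = mk4 1 (px A q) (px B q) 0"
    and Xy: "py (graph2 A B) q = mk4 0 (py A q) (py B q) 1" if "q \<in> M" for q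
    unfolding X using px_py_mk4[OF has_gradient_fst grad[OF A that] grad[OF B that] has_gradient_snd]
    by simp_all
  show "px (graph2 A B) p = mk4 1 (px A p) (px B p) 0" "py (graph2 A B) p = mk4 0 (py A p) (py B p) 1"
    using Xx Xy p by simp_all
  show "px (px (graph2 A B)) p = mk4 0 (px (px A) p) (px (px B) p) 0"
    "py (px (graph2 A B)) p = mk4 0 (py (px A) p) (py (px B) p) 0"
    using px_py_cong_open[OF M p Xx] px_py_mk4[OF has_gradient_const grad[OF smooth_on_px[OF A] p]
        grad[OF smooth_on_px[OF B] p] has_gradient_const]
    by simp_all
  show "py (py (graph2 A B)) p = mk4 0 (py (py A) p) (py (py B) p) 0"
    using px_py_cong_open(2)[OF M p Xy] px_py_mk4(2)[OF has_gradient_const grad[OF smooth_on_py[OF A] p]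
        grad[OF smooth_on_py[OF B] p] has_gradient_const]
    by simp
qed

lemma mean_curv_eq_0_imp_tangent:
  assumes "mean_curv X p = 0" and D: "EE X p * GG X p - (FF X p)\<^sup>2 > 0"
  obtains \<alpha> \<beta> where "GG X p *\<^sub>R px (px X) p - (2 * FF X p) *\<^sub>R py (px X) p + EE X p *\<^sub>R py (py X) p
    = \<alpha> *\<^sub>R px X p + \<beta> *\<^sub>R py X p"
proof -
  define E F G D where "E = EE X p" and "F = FF X p" and "G = GG X p" and "D = E * G - F\<^sup>2"
  define Xx Xy where "Xx = px X p" and "Xy = py X p"
  define a where "a w = (G * lip w Xx - F * lip w Xy) / D" for w
  define b where "b w = (E * lip w Xy - F * lip w Xx) / D" for w
  have nproj: "nproj X p w = w - a w *\<^sub>R Xx - b w *\<^sub>R Xy" for w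
    unfolding nproj_def a_def b_def Let_def E_def F_def G_def D_def Xx_def Xy_def EE_def FF_def GG_def ..
  define w1 w2 w3 where "w1 = px (px X) p" and "w2 = py (px X) p" and "w3 = py (py X) p"
  have "(1 / (2 * D)) *\<^sub>R (G *\<^sub>R nproj X p w1 - (2 * F) *\<^sub>R nproj X p w2 + E *\<^sub>R nproj X p w3) = 0"
    using assms(1) unfolding mean_curv_def Let_def D_def E_def F_def G_def w1_def w2_def w3_def .
  then have "G *\<^sub>R nproj X p w1 - (2 * F) *\<^sub>R nproj X p w2 + E *\<^sub>R nproj X p w3 = 0"
    using D by (simp add: D_def E_def F_def G_def)
  then have "G *\<^sub>R w1 - (2 * F) *\<^sub>R w2 + E *\<^sub>R w3 =
      (G * a w1 - 2 * F * a w2 + E * a w3) *\<^sub>R Xx + (G * b w1 - 2 * F * b w2 + E * b w3) *\<^sub>R Xy"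
    unfolding nproj by (simp add: algebra_simps)
  then show ?thesis
    using that unfolding E_def F_def G_def w1_def w2_def w3_def Xx_def Xy_def by blast
qed

text \<open>On a graph over the \<open>(i, j)\<close>-coordinate plane the tangent vectors have components
  \<open>(1, 0)\<close> and \<open>(0, 1)\<close> there, while the second derivatives have none.\<close>
lemma minimal_graph_laplacian_eq_0:
  fixes X :: "real \<times> real \<Rightarrow> real^4" and p :: "real \<times> real" and i j :: 4
  defines "V \<equiv> GG X p *\<^sub>R px (px X) p - (2 * FF X p) *\<^sub>R py (px X) p + EE X p *\<^sub>R py (py X) p"
  assumes "mean_curv X p = 0" and "EE X p * GG X p - (FF X p)\<^sup>2 > 0"
    and "V $ i = 0" "V $ j = 0"
    and "px X p $ i = 1" "px X p $ j = 0" "py X p $ i = 0" "py X p $ j = 1"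
  shows "V = 0"
proof -
  obtain \<alpha> \<beta> where V: "V = \<alpha> *\<^sub>R px X p + \<beta> *\<^sub>R py X p"
    using mean_curv_eq_0_imp_tangent[OF assms(2,3)] unfolding V_def by blast
  then have "V $ i = \<alpha>" "V $ j = \<beta>"
    using assms(6-9) by simp_all
  with assms(4,5) have "\<alpha> = 0" "\<beta> = 0"
    by simp_all
  with V show ?thesis
    by simp
qed

lemma graph1_minimal_equations:
  fixes A B :: "real \<times> real \<Rightarrow> real"
  defines "X \<equiv> graph1 A B"
  assumes M: "open M" and A: "smooth_on M A" and B: "smooth_on M B" and q: "q \<in> M"
    and H: "mean_curv X q = 0" and pos: "EE X q * GG X q - (FF X q)\<^sup>2 > 0"
  shows "EE X q = 1 + (-1) * (px A q)\<^sup>2 + 1 * (px B q)\<^sup>2"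
    and "FF X q = (-1) * px A q * py A q + 1 * px B q * py B q"
    and "GG X q = 1 + (-1) * (py A q)\<^sup>2 + 1 * (py B q)\<^sup>2"
    and "GG X q * px (px A) q - 2 * FF X q * py (px A) q + EE X q * py (py A) q = 0"
    and "GG X q * px (px B) q - 2 * FF X q * py (px B) q + EE X q * py (py B) q = 0"
proof -
  note d = graph1_partials[OF M A B q, folded X_def]
  show "EE X q = 1 + (-1) * (px A q)\<^sup>2 + 1 * (px B q)\<^sup>2"
    and "FF X q = (-1) * px A q * py A q + 1 * px B q * py B q"
    and "GG X q = 1 + (-1) * (py A q)\<^sup>2 + 1 * (py B q)\<^sup>2"
    by (simp_all add: d EE_def FF_def GG_def power2_eq_square)
  have V: "GG X q *\<^sub>R px (px X) q - (2 * FF X q) *\<^sub>R py (px X) q + EE X q *\<^sub>R py (py X) q = 0"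
    using H pos by (rule minimal_graph_laplacian_eq_0[where i = 2 and j = 3]) (simp_all add: d)
  from arg_cong[OF V, of "\<lambda>v. vec_nth v 1"] arg_cong[OF V, of "\<lambda>v. vec_nth v 4"]
  show "GG X q * px (px A) q - 2 * FF X q * py (px A) q + EE X q * py (py A) q = 0"
    and "GG X q * px (px B) q - 2 * FF X q * py (px B) q + EE X q * py (py B) q = 0"
    by (simp_all add: d)
qed

lemma graph2_minimal_equations:
  fixes A B :: "real \<times> real \<Rightarrow> real"
  defines "X \<equiv> graph2 A B"
  assumes M: "open M" and A: "smooth_on M A" and B: "smooth_on M B" and q: "q \<in> M"
    and H: "mean_curv X q = 0" and pos: "EE X q * GG X q - (FF X q)\<^sup>2 > 0"
  shows "EE X q = -1 + 1 * (px A q)\<^sup>2 + 1 * (px B q)\<^sup>2"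
    and "FF X q = 1 * px A q * py A q + 1 * px B q * py B q"
    and "GG X q = 1 + 1 * (py A q)\<^sup>2 + 1 * (py B q)\<^sup>2"
    and "GG X q * px (px A) q - 2 * FF X q * py (px A) q + EE X q * py (py A) q = 0"
    and "GG X q * px (px B) q - 2 * FF X q * py (px B) q + EE X q * py (py B) q = 0"
proof -
  note d = graph2_partials[OF M A B q, folded X_def]
  show "EE X q = -1 + 1 * (px A q)\<^sup>2 + 1 * (px B q)\<^sup>2"
    and "FF X q = 1 * px A q * py A q + 1 * px B q * py B q"
    and "GG X q = 1 + 1 * (py A q)\<^sup>2 + 1 * (py B q)\<^sup>2"
    by (simp_all add: d EE_def FF_def GG_def power2_eq_square)
  have V: "GG X q *\<^sub>R px (px X) q - (2 * FF X q) *\<^sub>R py (px X) q + EE X q *\<^sub>R py (py X) q = 0"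
    using H pos by (rule minimal_graph_laplacian_eq_0[where i = 1 and j = 4]) (simp_all add: d)
  from arg_cong[OF V, of "\<lambda>v. vec_nth v 2"] arg_cong[OF V, of "\<lambda>v. vec_nth v 3"]
  show "GG X q * px (px A) q - 2 * FF X q * py (px A) q + EE X q * py (py A) q = 0"
    and "GG X q * px (px B) q - 2 * FF X q * py (px B) q + EE X q * py (py B) q = 0"
    by (simp_all add: d)
qed

lemma minimal_graph_equations:
  assumes M: "open M" and A: "smooth_on M A" and B: "smooth_on M B"
    and X: "X = graph1 A B \<or> X = graph2 A B" and "spacelike_on M X" and "minimal_on M X"
  obtains kx ky sA sB :: real where
    "\<And>q. q \<in> M \<Longrightarrow> EE X q = kx + sA * (px A q)\<^sup>2 + sB * (px B q)\<^sup>2"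
    "\<And>q. q \<in> M \<Longrightarrow> FF X q = sA * px A q * py A q + sB * px B q * py B q"
    "\<And>q. q \<in> M \<Longrightarrow> GG X q = ky + sA * (py A q)\<^sup>2 + sB * (py B q)\<^sup>2"
    "\<And>q. q \<in> M \<Longrightarrow> GG X q * px (px A) q - 2 * FF X q * py (px A) q + EE X q * py (py A) q = 0"
    "\<And>q. q \<in> M \<Longrightarrow> GG X q * px (px B) q - 2 * FF X q * py (px B) q + EE X q * py (py B) q = 0"
proof -
  have minimal: "mean_curv X q = 0" "EE X q * GG X q - (FF X q)\<^sup>2 > 0" if "q \<in> M" for q
    using assms(5,6) that unfolding spacelike_on_def minimal_on_def by auto
  from X consider "X = graph1 A B" | "X = graph2 A B"
    by blast
  then show ?thesis
  proof cases
    case 1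
    from graph1_minimal_equations[OF M A B _ minimal[unfolded 1], folded 1] show ?thesis
      by (rule that)
  next
    case 2
    from graph2_minimal_equations[OF M A B _ minimal[unfolded 2], folded 2] show ?thesis
      by (rule that)
  qed
qed

lemma has_gradient_sum_of_products:
  assumes "has_gradient u ux uy p" "has_gradient v vx vy p" "has_gradient w wx wy p" "has_gradient z zx zy p"
  shows "has_gradient (\<lambda>q. k + s * (u q * v q) + s' * (w q * z q))
    (\<lambda>q. s * (ux q * v q + u q * vx q) + s' * (wx q * z q + w q * zx q))
    (\<lambda>q. s * (uy q * v q + u q * vy q) + s' * (wy q * z q + w q * zy q)) p"
  using has_gradient_add[OF has_gradient_add[OF has_gradient_const
        has_gradient_mult[OF has_gradient_const has_gradient_mult[OF assms(1,2)]]]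
      has_gradient_mult[OF has_gradient_const has_gradient_mult[OF assms(3,4)]]]
  by (rule has_gradient_cong) simp_all

text \<open>\<open>E\<close>, \<open>F\<close>, \<open>G\<close> are the coefficients of the metric induced on the graph of \<open>(A, B)\<close> by the flat
  metric \<open>kx dx\<^sup>2 + ky dy\<^sup>2 + sA dA\<^sup>2 + sB dB\<^sup>2\<close>.\<close>
lemma graph_metric_partials:
  fixes A B :: "real \<times> real \<Rightarrow> real" and kx ky sA sB :: real
  defines "E \<equiv> \<lambda>q. kx + sA * (px A q)\<^sup>2 + sB * (px B q)\<^sup>2"
    and "F \<equiv> \<lambda>q. sA * px A q * py A q + sB * px B q * py B q"
    and "G \<equiv> \<lambda>q. ky + sA * (py A q)\<^sup>2 + sB * (py B q)\<^sup>2"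
  assumes M: "open M" and A: "smooth_on M A" and B: "smooth_on M B"
  shows "Ck_on 1 M E" "Ck_on 1 M F" "Ck_on 1 M G"
    and "\<And>q. q \<in> M \<Longrightarrow> px E q = 2 * (sA * px A q * px (px A) q + sB * px B q * px (px B) q)"
    and "\<And>q. q \<in> M \<Longrightarrow> py E q = 2 * (sA * px A q * py (px A) q + sB * px B q * py (px B) q)"
    and "\<And>q. q \<in> M \<Longrightarrow> px F q = sA * (px (px A) q * py A q + px A q * py (px A) q)
      + sB * (px (px B) q * py B q + px B q * py (px B) q)"
    and "\<And>q. q \<in> M \<Longrightarrow> py F q = sA * (py (px A) q * py A q + px A q * py (py A) q)
      + sB * (py (px B) q * py B q + px B q * py (py B) q)"
    and "\<And>q. q \<in> M \<Longrightarrow> px G q = 2 * (sA * py A q * py (px A) q + sB * py B q * py (px B) q)"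
    and "\<And>q. q \<in> M \<Longrightarrow> py G q = 2 * (sA * py A q * py (py A) q + sB * py B q * py (py B) q)"
proof -
  note second = smooth_on_has_gradient_partials[OF M]
  have E: "E = (\<lambda>q. kx + sA * (px A q * px A q) + sB * (px B q * px B q))"
    and F: "F = (\<lambda>q. 0 + sA * (px A q * py A q) + sB * (px B q * py B q))"
    and G: "G = (\<lambda>q. ky + sA * (py A q * py A q) + sB * (py B q * py B q))"
    by (simp_all add: E_def F_def G_def power2_eq_square mult.assoc)
  have gE: "has_gradient E
      (\<lambda>q. sA * (px (px A) q * px A q + px A q * px (px A) q) + sB * (px (px B) q * px B q + px B q * px (px B) q))
      (\<lambda>q. sA * (py (px A) q * px A q + px A q * py (px A) q) + sB * (py (px B) q * px B q + px B q * py (px B) q)) q"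
    and gF: "has_gradient F
      (\<lambda>q. sA * (px (px A) q * py A q + px A q * py (px A) q) + sB * (px (px B) q * py B q + px B q * py (px B) q))
      (\<lambda>q. sA * (py (px A) q * py A q + px A q * py (py A) q) + sB * (py (px B) q * py B q + px B q * py (py B) q)) q"
    and gG: "has_gradient G
      (\<lambda>q. sA * (py (px A) q * py A q + py A q * py (px A) q) + sB * (py (px B) q * py B q + py B q * py (px B) q))
      (\<lambda>q. sA * (py (py A) q * py A q + py A q * py (py A) q) + sB * (py (py B) q * py B q + py B q * py (py B) q)) q"
    if "q \<in> M" for q
    unfolding E F G by (intro has_gradient_sum_of_products second[OF A that] second[OF B that])+
  have cont: "continuous_on M (px f)" "continuous_on M (py f)" "continuous_on M (px (px f))"
    "continuous_on M (py (px f))" "continuous_on M (py (py f))" if "smooth_on M f" for f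
    using that by (simp_all add: smooth_on_continuous smooth_on_px smooth_on_py)
  show "Ck_on 1 M E" "Ck_on 1 M F" "Ck_on 1 M G"
    by (rule Ck_on_1I[OF M gE] Ck_on_1I[OF M gF] Ck_on_1I[OF M gG];
        simp add: cont A B continuous_intros)+
  show "px E q = 2 * (sA * px A q * px (px A) q + sB * px B q * px (px B) q)"
    and "py E q = 2 * (sA * px A q * py (px A) q + sB * px B q * py (px B) q)"
    and "px F q = sA * (px (px A) q * py A q + px A q * py (px A) q)
      + sB * (px (px B) q * py B q + px B q * py (px B) q)"
    and "py F q = sA * (py (px A) q * py A q + px A q * py (py A) q)
      + sB * (py (px B) q * py B q + px B q * py (py B) q)"
    and "px G q = 2 * (sA * py A q * py (px A) q + sB * py B q * py (px B) q)"
    and "py G q = 2 * (sA * py A q * py (py A) q + sB * py B q * py (py B) q)"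
    if "q \<in> M" for q
    using has_gradient_imp_px_py[OF gE[OF that]] has_gradient_imp_px_py[OF gF[OF that]]
      has_gradient_imp_px_py[OF gG[OF that]]
    by (simp_all add: algebra_simps)
qed

lemma graph_metric_forms_closed:
  fixes A B :: "real \<times> real \<Rightarrow> real" and kx ky sA sB :: real
  defines "E \<equiv> \<lambda>q. kx + sA * (px A q)\<^sup>2 + sB * (px B q)\<^sup>2"
    and "F \<equiv> \<lambda>q. sA * px A q * py A q + sB * px B q * py B q"
    and "G \<equiv> \<lambda>q. ky + sA * (py A q)\<^sup>2 + sB * (py B q)\<^sup>2"
  defines "W \<equiv> \<lambda>q. sqrt (E q * G q - (F q)\<^sup>2)"
  assumes M: "open M" and A: "smooth_on M A" and B: "smooth_on M B"
    and pos: "\<forall>q\<in>M. E q * G q - (F q)\<^sup>2 > 0"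
    and pde_A: "\<forall>q\<in>M. G q * px (px A) q - 2 * F q * py (px A) q + E q * py (py A) q = 0"
    and pde_B: "\<forall>q\<in>M. G q * px (px B) q - 2 * F q * py (px B) q + E q * py (py B) q = 0"
  shows "Ck_on 1 M (\<lambda>q. E q / W q)" "Ck_on 1 M (\<lambda>q. F q / W q)" "Ck_on 1 M (\<lambda>q. G q / W q)"
    and "\<forall>q\<in>M. py (\<lambda>q. E q / W q) q = px (\<lambda>q. F q / W q) q"
    and "\<forall>q\<in>M. py (\<lambda>q. F q / W q) q = px (\<lambda>q. G q / W q) q"
proof -
  have C1: "Ck_on 1 M E" "Ck_on 1 M F" "Ck_on 1 M G"
    unfolding E_def F_def G_def by (rule graph_metric_partials[OF M A B])+
  have EFG': "px E q = 2 * (sA * px A q * px (px A) q + sB * px B q * px (px B) q)"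
    "py E q = 2 * (sA * px A q * py (px A) q + sB * px B q * py (px B) q)"
    "px F q = sA * (px (px A) q * py A q + px A q * py (px A) q)
      + sB * (px (px B) q * py B q + px B q * py (px B) q)"
    "py F q = sA * (py (px A) q * py A q + px A q * py (py A) q)
      + sB * (py (px B) q * py B q + px B q * py (py B) q)"
    "px G q = 2 * (sA * py A q * py (px A) q + sB * py B q * py (px B) q)"
    "py G q = 2 * (sA * py A q * py (py A) q + sB * py B q * py (py B) q)" if "q \<in> M" for q
    unfolding E_def F_def G_def using that by (rule graph_metric_partials[OF M A B])+
  define D where "D q = E q * G q - (F q)\<^sup>2" for q
  have W: "W = (\<lambda>q. sqrt (D q))"
    by (simp add: W_def D_def)
  note det = Ck_on_1_det[OF M C1, folded D_def]
  have "\<forall>q\<in>M. D q > 0"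
    using pos by (simp add: D_def)
  note quotient = Ck_on_1_div_sqrt[OF M _ det(1) this]
  show "Ck_on 1 M (\<lambda>q. E q / W q)" "Ck_on 1 M (\<lambda>q. F q / W q)" "Ck_on 1 M (\<lambda>q. G q / W q)"
    unfolding W using quotient C1 by blast+
  have "py (\<lambda>q. E q / W q) q = px (\<lambda>q. F q / W q) q"
    and "py (\<lambda>q. F q / W q) q = px (\<lambda>q. G q / W q) q" if q: "q \<in> M" for q
  proof -
    define LA LB where "LA = G q * px (px A) q - 2 * F q * py (px A) q + E q * py (py A) q"
      and "LB = G q * px (px B) q - 2 * F q * py (px B) q + E q * py (py B) q"
    \<comment> \<open>The numerators of both differences are combinations of the minimal surface equations.\<close>
    have "2 * D q * (py E q - px F q) - (E q * py D q - F q * px D q)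
        = 2 * sA * (F q * px A q - E q * py A q) * LA + 2 * sB * (F q * px B q - E q * py B q) * LB"
      and "2 * D q * (py F q - px G q) - (F q * py D q - G q * px D q)
        = 2 * sA * (G q * px A q - F q * py A q) * LA + 2 * sB * (G q * px B q - F q * py B q) * LB"
      unfolding det(2,3)[OF q] EFG'[OF q]
      unfolding D_def E_def F_def G_def LA_def LB_def by algebra+
    moreover have "LA = 0" "LB = 0"
      using pde_A pde_B q by (simp_all add: LA_def LB_def)
    ultimately have "2 * D q * py E q - E q * py D q = 2 * D q * px F q - F q * px D q"
      and "2 * D q * py F q - F q * py D q = 2 * D q * px G q - G q * px D q"
      by (simp_all add: right_diff_distrib)
    then show "py (\<lambda>q. E q / W q) q = px (\<lambda>q. F q / W q) q"
      and "py (\<lambda>q. F q / W q) q = px (\<lambda>q. G q / W q) q"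
      unfolding W quotient(2,3)[OF C1(1) q] quotient(2,3)[OF C1(2) q] quotient(2,3)[OF C1(3) q]
      by simp_all
  qed
  then show "\<forall>q\<in>M. py (\<lambda>q. E q / W q) q = px (\<lambda>q. F q / W q) q"
    and "\<forall>q\<in>M. py (\<lambda>q. F q / W q) q = px (\<lambda>q. G q / W q) q"
    by simp_all
qed

lemma minimal_graph_potentials:
  assumes M: "open M" and sc: "simply_connected M" and A: "smooth_on M A" and B: "smooth_on M B"
    and X: "X = graph1 A B \<or> X = graph2 A B" and sp: "spacelike_on M X" and mn: "minimal_on M X"
  obtains \<Phi> \<Psi> where
    "\<And>p. p \<in> M \<Longrightarrow> (\<Phi> has_derivative (\<lambda>h. EE X p / WW X p * fst h + FF X p / WW X p * snd h)) (at p)"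
    "\<And>p. p \<in> M \<Longrightarrow> (\<Psi> has_derivative (\<lambda>h. FF X p / WW X p * fst h + GG X p / WW X p * snd h)) (at p)"
proof -
  obtain kx sA sB ky where
    E: "\<And>q. q \<in> M \<Longrightarrow> EE X q = kx + sA * (px A q)\<^sup>2 + sB * (px B q)\<^sup>2"
    and F: "\<And>q. q \<in> M \<Longrightarrow> FF X q = sA * px A q * py A q + sB * px B q * py B q"
    and G: "\<And>q. q \<in> M \<Longrightarrow> GG X q = ky + sA * (py A q)\<^sup>2 + sB * (py B q)\<^sup>2"
    and pde: "\<And>q. q \<in> M \<Longrightarrow> GG X q * px (px A) q - 2 * FF X q * py (px A) q + EE X q * py (py A) q = 0"
      "\<And>q. q \<in> M \<Longrightarrow> GG X q * px (px B) q - 2 * FF X q * py (px B) q + EE X q * py (py B) q = 0"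
    by (rule minimal_graph_equations[OF M A B X sp mn]) blast
  define E' F' G' W' where "E' q = kx + sA * (px A q)\<^sup>2 + sB * (px B q)\<^sup>2"
    and "F' q = sA * px A q * py A q + sB * px B q * py B q"
    and "G' q = ky + sA * (py A q)\<^sup>2 + sB * (py B q)\<^sup>2"
    and "W' q = sqrt (E' q * G' q - (F' q)\<^sup>2)" for q
  have eq: "EE X p = E' p" "FF X p = F' p" "GG X p = G' p" "WW X p = W' p" if "p \<in> M" for p
    using that by (simp_all add: E'_def F'_def G'_def W'_def E F G WW_def)
  have "\<forall>q\<in>M. E' q * G' q - (F' q)\<^sup>2 > 0"
    "\<forall>q\<in>M. G' q * px (px A) q - 2 * F' q * py (px A) q + E' q * py (py A) q = 0"
    "\<forall>q\<in>M. G' q * px (px B) q - 2 * F' q * py (px B) q + E' q * py (py B) q = 0"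
    using sp pde unfolding spacelike_on_def by (simp_all add: eq)
  from graph_metric_forms_closed[OF M A B this[unfolded E'_def F'_def G'_def]]
  have closed: "Ck_on 1 M (\<lambda>q. E' q / W' q)" "Ck_on 1 M (\<lambda>q. F' q / W' q)" "Ck_on 1 M (\<lambda>q. G' q / W' q)"
    "\<forall>q\<in>M. py (\<lambda>q. E' q / W' q) q = px (\<lambda>q. F' q / W' q) q"
    "\<forall>q\<in>M. py (\<lambda>q. F' q / W' q) q = px (\<lambda>q. G' q / W' q) q"
    unfolding W'_def E'_def F'_def G'_def by blast+
  have "\<exists>\<Phi>. \<forall>p\<in>M. (\<Phi> has_derivative (\<lambda>h. E' p / W' p * fst h + F' p / W' p * snd h)) (at p)"
    using closed(4) by (intro closed_form_has_primitive[OF M sc closed(1,2)]) blast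
  moreover have "\<exists>\<Psi>. \<forall>p\<in>M. (\<Psi> has_derivative (\<lambda>h. F' p / W' p * fst h + G' p / W' p * snd h)) (at p)"
    using closed(5) by (intro closed_form_has_primitive[OF M sc closed(2,3)]) blast
  ultimately show ?thesis
    using that by (auto simp: eq)
qed

section \<open>Isothermal parameters\<close>

lemma isothermal_jacobian:
  fixes E F G W ux uy vx vy :: real
  assumes E: "E > 0" and D: "E * G - F\<^sup>2 > 0" and W: "W = sqrt (E * G - F\<^sup>2)"
    and u: "ux = 1 + E / W" "uy = F / W" and v: "vx = F / W" "vy = 1 + G / W"
  shows "uy = F / E * ux - W / E * vx" and "vy = W / E * ux + F / E * vx"
    and "ux * vy - uy * vx \<noteq> 0"
    and "\<exists>l>0. E = l\<^sup>2 * (ux\<^sup>2 + vx\<^sup>2) \<and> F = l\<^sup>2 * (ux * uy + vx * vy) \<and> G = l\<^sup>2 * (uy\<^sup>2 + vy\<^sup>2)"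
proof -
  have Wp: "W > 0" and WW: "W * W = E * G - F * F"
    using D W by (simp_all add: power2_eq_square)
  have G: "G > 0"
    using E D by (smt (verit) mult_nonneg_nonpos zero_le_power2)
  show "uy = F / E * ux - W / E * vx"
    using E Wp unfolding u v by (simp add: field_simps)
  have "W / E * ux + F / E * vx = (W * W + F * F + E * W) / (E * W)"
    using E Wp unfolding u v by (simp add: field_simps)
  also have "\<dots> = vy"
    using E Wp unfolding WW v by (simp add: field_simps)
  finally show "vy = W / E * ux + F / E * vx" ..
  \<comment> \<open>The conformal factor is \<open>l\<^sup>2 = W\<^sup>2 / (2 W + E + G)\<close>.\<close>
  define S where "S = 2 * W + E + G"
  have S: "S > 0"
    using Wp E G by (simp add: S_def)
  have "ux * vy - uy * vx = (W * W + (E + G) * W + (E * G - F * F)) / (W * W)"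
    using Wp unfolding u v by (simp add: field_simps)
  also have "\<dots> = S / W"
    using Wp unfolding WW[symmetric] S_def by (simp add: field_simps)
  finally show "ux * vy - uy * vx \<noteq> 0"
    using S Wp by simp
  have "ux\<^sup>2 + vx\<^sup>2 = (W * W + 2 * E * W + E * E + F * F) / (W * W)"
    "uy\<^sup>2 + vy\<^sup>2 = (F * F + W * W + 2 * G * W + G * G) / (W * W)"
    using Wp unfolding u v by (simp_all add: field_simps power2_eq_square)
  then have "ux\<^sup>2 + vx\<^sup>2 = E * S / (W * W)" "uy\<^sup>2 + vy\<^sup>2 = G * S / (W * W)"
    using WW by (simp_all add: S_def algebra_simps)
  moreover have "ux * uy + vx * vy = F * S / (W * W)"
    using Wp unfolding u v S_def by (simp add: field_simps)
  ultimately show "\<exists>l>0. E = l\<^sup>2 * (ux\<^sup>2 + vx\<^sup>2) \<and> F = l\<^sup>2 * (ux * uy + vx * vy) \<and> G = l\<^sup>2 * (uy\<^sup>2 + vy\<^sup>2)"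
    using Wp S by (intro exI[of _ "W / sqrt S"]) (simp add: power_divide power2_eq_square)
qed

lemma isothermal_parameters_from_potentials:
  fixes E F G W \<Phi> \<Psi> :: "real \<times> real \<Rightarrow> real"
  assumes pos: "\<And>p. p \<in> M \<Longrightarrow> E p > 0 \<and> E p * G p - (F p)\<^sup>2 > 0"
    and W: "\<And>p. W p = sqrt (E p * G p - (F p)\<^sup>2)"
    and \<Phi>: "\<And>p. p \<in> M \<Longrightarrow> (\<Phi> has_derivative (\<lambda>h. E p / W p * fst h + F p / W p * snd h)) (at p)"
    and \<Psi>: "\<And>p. p \<in> M \<Longrightarrow> (\<Psi> has_derivative (\<lambda>h. F p / W p * fst h + G p / W p * snd h)) (at p)"
  shows "\<exists>u v :: real \<times> real \<Rightarrow> real.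
     u z0 = fst z0 \<and> v z0 = snd z0 \<and>
     (\<forall>p\<in>M.
        (u has_derivative (\<lambda>h. (1 + E p / W p) * fst h + (F p / W p) * snd h)) (at p) \<and>
        (v has_derivative (\<lambda>h. (F p / W p) * fst h + (1 + G p / W p) * snd h)) (at p)) \<and>
     (\<forall>p\<in>M.
        py u p = (F p / E p) * px u p - (W p / E p) * px v p \<and>
        py v p = (W p / E p) * px u p + (F p / E p) * px v p) \<and>
     (\<forall>p\<in>M. px u p * py v p - py u p * px v p \<noteq> 0) \<and>
     (\<exists>lam :: real \<times> real \<Rightarrow> real. \<forall>p\<in>M. lam p > 0 \<and>
        E p = (lam p)\<^sup>2 * ((px u p)\<^sup>2 + (px v p)\<^sup>2) \<and>
        F p = (lam p)\<^sup>2 * (px u p * py u p + px v p * py v p) \<and>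
        G p = (lam p)\<^sup>2 * ((py u p)\<^sup>2 + (py v p)\<^sup>2))"
proof -
  define u v where "u q = fst q + (\<Phi> q - \<Phi> z0)" and "v q = snd q + (\<Psi> q - \<Psi> z0)" for q
  have du: "has_gradient u (\<lambda>p. 1 + E p / W p) (\<lambda>p. F p / W p) p"
    and dv: "has_gradient v (\<lambda>p. F p / W p) (\<lambda>p. 1 + G p / W p) p" if "p \<in> M" for p
    unfolding has_gradient_def u_def v_def
    using \<Phi>[OF that] \<Psi>[OF that] by (auto intro!: derivative_eq_intros simp: algebra_simps)
  note jacobian = isothermal_jacobian[OF conjunct1[OF pos] conjunct2[OF pos] W
      has_gradient_imp_px_py[OF du] has_gradient_imp_px_py[OF dv]]
  have "u z0 = fst z0" "v z0 = snd z0"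
    by (simp_all add: u_def v_def)
  moreover have "\<forall>p\<in>M. (u has_derivative (\<lambda>h. (1 + E p / W p) * fst h + (F p / W p) * snd h)) (at p) \<and>
      (v has_derivative (\<lambda>h. (F p / W p) * fst h + (1 + G p / W p) * snd h)) (at p)"
    using du dv by (simp add: has_gradient_def)
  moreover have "\<forall>p\<in>M. py u p = (F p / E p) * px u p - (W p / E p) * px v p \<and>
      py v p = (W p / E p) * px u p + (F p / E p) * px v p"
    and "\<forall>p\<in>M. px u p * py v p - py u p * px v p \<noteq> 0"
    using jacobian(1-3) by blast+
  moreover have "\<exists>lam. \<forall>p\<in>M. lam p > 0 \<and> E p = (lam p)\<^sup>2 * ((px u p)\<^sup>2 + (px v p)\<^sup>2) \<and>
      F p = (lam p)\<^sup>2 * (px u p * py u p + px v p * py v p) \<and>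
      G p = (lam p)\<^sup>2 * ((py u p)\<^sup>2 + (py v p)\<^sup>2)"
    using jacobian(4) by (intro bchoice) blast
  ultimately show ?thesis
    by (intro exI[of _ u] exI[of _ v]) blast
qed

theorem theorem5p9:
  fixes M :: "(real \<times> real) set" and A B :: "real \<times> real \<Rightarrow> real"
    and X :: "real \<times> real \<Rightarrow> real^4" and z0 :: "real \<times> real"
  assumes "open M" and "connected M" and "simply_connected M"
    and "smooth_on M A" and "smooth_on M B"
    and "X = graph1 A B \<or> X = graph2 A B"
    and "spacelike_on M X" and "minimal_on M X"
    and "z0 \<in> M"
  shows "\<exists>u v :: real \<times> real \<Rightarrow> real.
     u z0 = fst z0 \<and> v z0 = snd z0 \<and>
     (\<forall>p\<in>M.
        (u has_derivative (\<lambda>h. (1 + EE X p / WW X p) * fst h + (FF X p / WW X p) * snd h)) (at p) \<and>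
        (v has_derivative (\<lambda>h. (FF X p / WW X p) * fst h + (1 + GG X p / WW X p) * snd h)) (at p)) \<and>
     (\<forall>p\<in>M.
        py u p = (FF X p / EE X p) * px u p - (WW X p / EE X p) * px v p \<and>
        py v p = (WW X p / EE X p) * px u p + (FF X p / EE X p) * px v p) \<and>
     (\<forall>p\<in>M. px u p * py v p - py u p * px v p \<noteq> 0) \<and>
     (\<exists>lam :: real \<times> real \<Rightarrow> real. \<forall>p\<in>M. lam p > 0 \<and>
        EE X p = (lam p)\<^sup>2 * ((px u p)\<^sup>2 + (px v p)\<^sup>2) \<and>
        FF X p = (lam p)\<^sup>2 * (px u p * py u p + px v p * py v p) \<and>
        GG X p = (lam p)\<^sup>2 * ((py u p)\<^sup>2 + (py v p)\<^sup>2))"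
proof -
  obtain \<Phi> \<Psi> where
    "\<And>p. p \<in> M \<Longrightarrow> (\<Phi> has_derivative (\<lambda>h. EE X p / WW X p * fst h + FF X p / WW X p * snd h)) (at p)"
    "\<And>p. p \<in> M \<Longrightarrow> (\<Psi> has_derivative (\<lambda>h. FF X p / WW X p * fst h + GG X p / WW X p * snd h)) (at p)"
    by (rule minimal_graph_potentials[OF assms(1,3,4,5,6,7,8)]) blast
  moreover have "\<And>p. p \<in> M \<Longrightarrow> EE X p > 0 \<and> EE X p * GG X p - (FF X p)\<^sup>2 > 0"
    using assms(7) by (simp add: spacelike_on_def)
  ultimately show ?thesis
    using isothermal_parameters_from_potentials[of M "EE X" "GG X" "FF X" "WW X"] WW_def by blast
qed

end
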